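(* Let $\phi$ be a Pogorelov solution and $\phi^*(x)=\sup_{y\in B(0,1)}\{x\cdot y-\phi(y)\}$ its Legendre–Fenchel dual. Let $x\in\mathbb{R}^2$ be any point outside the convex hull of $\{d_1,\dots,d_K\}$. Then $\partial\phi^*(x)\subset\partial B(0,1)$.
   Context: Let $K\ge 1$, $d_1,\dots,d_K\in\mathbb{R}^2$, $\alpha_1,\dots,\alpha_K>0$ with $\sum_k\alpha_k=\pi=|B(0,1)|$, where $B(0,1)$ is the unit ball of $\mathbb{R}^2$, $\partial B(0,1)$ its boundary circle, and $|\cdot|$ is Lebesgue measure. Subgradient of a convex $u$: $\partial u(x)=\{p: u(z)\ge u(x)+p\cdot(z-x)\ \forall z\in\mathbb{R}^2\}$. A Pogorelov solution is a function $\phi(y)=\max_{k}\{y\cdot d_k-v_k\}$ on $B(0,1)$ (extended by $+\infty$ outside $B(0,1)$), for some reals $v_1,\dots,v_K$, such that $|C_k|=\alpha_k$ for every $k$, where $C_k=\{y\in B(0,1):\phi$ is differentiable at $y$ and $\nabla\phi(y)=d_k\}$. *)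

theory Defs
  imports "HOL-Analysis.Analysis"
begin

definition subgrad :: "(real^2 \<Rightarrow> real) \<Rightarrow> real^2 \<Rightarrow> (real^2) set" where
  "subgrad u x = {p. \<forall>z. u z \<ge> u x + p \<bullet> (z - x)}"

definition pog_phi :: "nat \<Rightarrow> (nat \<Rightarrow> real^2) \<Rightarrow> (nat \<Rightarrow> real) \<Rightarrow> real^2 \<Rightarrow> real" where
  "pog_phi K d v y = Max ((\<lambda>k. y \<bullet> d k - v k) ` {1..K})"

definition pog_cell :: "nat \<Rightarrow> (nat \<Rightarrow> real^2) \<Rightarrow> (nat \<Rightarrow> real) \<Rightarrow> nat \<Rightarrow> (real^2) set" where
  "pog_cell K d v k = {y \<in> ball 0 1. (pog_phi K d v has_derivative (\<lambda>h. d k \<bullet> h)) (at y)}"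

definition pogorelov :: "nat \<Rightarrow> (nat \<Rightarrow> real^2) \<Rightarrow> (nat \<Rightarrow> real) \<Rightarrow> (nat \<Rightarrow> real) \<Rightarrow> bool" where
  "pogorelov K d alpha v \<longleftrightarrow>
     (\<forall>k\<in>{1..K}. emeasure lebesgue (pog_cell K d v k) = ennreal (alpha k))"

text \<open>Legendre-Fenchel dual of phi (phi = +infinity outside the closed unit ball).\<close>
definition pog_dual :: "nat \<Rightarrow> (nat \<Rightarrow> real^2) \<Rightarrow> (nat \<Rightarrow> real) \<Rightarrow> real^2 \<Rightarrow> real" where
  "pog_dual K d v x = (SUP y\<in>cball 0 1. x \<bullet> y - pog_phi K d v y)"

end

theory Submission
  imports Defs
begin

text \<open>
  Only the max-affine shape of \<open>\<phi>\<close> matters. Since \<open>\<phi>\<close> is finite exactly on the closed unit ball, \<open>\<phi>\<^sup>*\<close> grows at most like \<open>|x|\<close>, so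
  every subgradient \<open>p\<close> of \<open>\<phi>\<^sup>*\<close> satisfies \<open>|p| \<le> 1\<close>; testing the subgradient inequality at an
  active slope \<open>d\<^sub>k\<close> of \<open>\<phi>\<close> at \<open>p\<close> shows that \<open>p\<close> attains the supremum defining \<open>\<phi>\<^sup>*(x)\<close>.
  If \<open>x\<close> lies outside the convex hull of the slopes, a separating direction \<open>a\<close> satisfies
  \<open>a\<cdot>x < a\<cdot>d\<^sub>k\<close> for all \<open>k\<close>, so moving from \<open>p\<close> in direction \<open>-a\<close> increases \<open>x\<cdot>y - \<phi>(y)\<close>;
  hence the maximiser \<open>p\<close> cannot lie in the open ball.
\<close>

lemma pog_phi_ge:
  assumes "k \<in> {1..K}"
  shows "y \<bullet> d k - v k \<le> pog_phi K d v y"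
  unfolding pog_phi_def using assms by (intro Max_ge) auto

lemma pog_phi_attained:
  assumes "K \<ge> 1"
  obtains k where "k \<in> {1..K}" "pog_phi K d v y = y \<bullet> d k - v k"
proof -
  have "pog_phi K d v y \<in> (\<lambda>k. y \<bullet> d k - v k) ` {1..K}"
    unfolding pog_phi_def using assms by (intro Max_in) auto
  then show ?thesis using that by blast
qed

lemma pog_phi_translate_less:
  assumes "K \<ge> 1" "\<forall>k\<in>{1..K}. b < a \<bullet> d k" "s > 0"
  shows "pog_phi K d v (y - s *\<^sub>R a) < pog_phi K d v y - s * b"
proof -
  obtain k where k: "k \<in> {1..K}" "pog_phi K d v (y - s *\<^sub>R a) = (y - s *\<^sub>R a) \<bullet> d k - v k"
    using pog_phi_attained[OF assms(1)] by blast
  have "(y - s *\<^sub>R a) \<bullet> d k - v k = (y \<bullet> d k - v k) - s * (a \<bullet> d k)"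
    by (simp add: inner_diff_left)
  also have "\<dots> < (y \<bullet> d k - v k) - s * b"
    using assms(2,3) k(1) by simp
  also have "\<dots> \<le> pog_phi K d v y - s * b"
    using pog_phi_ge[OF k(1)] by simp
  finally show ?thesis using k(2) by simp
qed

lemma inner_minus_pog_phi_le:
  assumes "k \<in> {1..K}" "y \<in> cball 0 1"
  shows "z \<bullet> y - pog_phi K d v y \<le> norm z + norm (d k) + v k"
proof -
  have "z \<bullet> y \<le> norm z"
    using norm_cauchy_schwarz[of z y] assms(2) mult_left_le[of "norm y" "norm z"] by simp
  moreover have "- (y \<bullet> d k) \<le> norm (d k)"
    using norm_cauchy_schwarz[of "-y" "d k"] assms(2) mult_left_le_one_le[of "norm (d k)" "norm y"]
    by simp
  ultimately show ?thesis
    using pog_phi_ge[OF assms(1), of y d v] by linarith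
qed

lemma pog_dual_ge:
  assumes "K \<ge> 1" "y \<in> cball 0 1"
  shows "z \<bullet> y - pog_phi K d v y \<le> pog_dual K d v z"
proof -
  have "bdd_above ((\<lambda>y. z \<bullet> y - pog_phi K d v y) ` cball 0 1)"
    using inner_minus_pog_phi_le[of 1 K] assms(1) by (intro bdd_aboveI2) auto
  then show ?thesis
    unfolding pog_dual_def using assms(2) by (intro cSUP_upper) auto
qed

lemma pog_dual_le_norm:
  assumes "k \<in> {1..K}"
  shows "pog_dual K d v z \<le> norm z + (norm (d k) + v k)"
  unfolding pog_dual_def using inner_minus_pog_phi_le[OF assms]
  by (intro cSUP_least) (auto simp: add.assoc)

lemma pog_dual_slope_le:
  assumes "k \<in> {1..K}"
  shows "pog_dual K d v (d k) \<le> v k"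
  unfolding pog_dual_def
proof (rule cSUP_least)
  fix y :: "real^2"
  show "d k \<bullet> y - pog_phi K d v y \<le> v k"
    using pog_phi_ge[OF assms, of y d v] by (simp add: inner_commute)
qed simp

lemma subgrad_norm_le:
  assumes growth: "\<And>z. u z \<le> L * norm z + C" and "L \<ge> 0" and "p \<in> subgrad u x"
  shows "norm p \<le> L"
proof (rule ccontr)
  assume "\<not> norm p \<le> L"
  define c where "c = norm p * (norm p - L)"
  have "c > 0"
    unfolding c_def using \<open>\<not> norm p \<le> L\<close> \<open>L \<ge> 0\<close> by (intro mult_pos_pos) auto
  define t where "t = (\<bar>L * norm x + C - u x\<bar> + 1) / c"
  have "t > 0" unfolding t_def using \<open>c > 0\<close> by simp
  have "u x + t * (norm p * norm p) = u x + p \<bullet> ((x + t *\<^sub>R p) - x)"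
    by (simp add: dot_square_norm power2_eq_square)
  also have "\<dots> \<le> u (x + t *\<^sub>R p)"
    using assms(3) unfolding subgrad_def by blast
  also have "\<dots> \<le> L * norm (x + t *\<^sub>R p) + C" by (rule growth)
  also have "\<dots> \<le> L * (norm x + t * norm p) + C"
    using norm_triangle_ineq[of x "t *\<^sub>R p"] \<open>t > 0\<close> \<open>L \<ge> 0\<close> by (simp add: mult_left_mono)
  finally have "t * c \<le> L * norm x + C - u x"
    unfolding c_def by (simp add: algebra_simps)
  moreover have "t * c = \<bar>L * norm x + C - u x\<bar> + 1"
    unfolding t_def using \<open>c > 0\<close> by simp
  ultimately show False by linarith
qed

lemma subgrad_pog_dual_attains:
  assumes "K \<ge> 1" "p \<in> subgrad (pog_dual K d v) x"
  shows "pog_dual K d v x \<le> x \<bullet> p - pog_phi K d v p"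
proof -
  obtain k where k: "k \<in> {1..K}" "pog_phi K d v p = p \<bullet> d k - v k"
    using pog_phi_attained[OF assms(1)] by blast
  have "pog_dual K d v x + p \<bullet> (d k - x) \<le> pog_dual K d v (d k)"
    using assms(2) unfolding subgrad_def by blast
  also have "\<dots> \<le> v k" by (rule pog_dual_slope_le[OF k(1)])
  finally show ?thesis
    using k(2) by (simp add: inner_diff_right inner_commute)
qed

lemma separate_point_finite_set:
  fixes x :: "'a::euclidean_space"
  assumes "finite S" "x \<notin> convex hull S"
  obtains a b where "a \<bullet> x < b" "\<forall>y\<in>S. b < a \<bullet> y"
proof -
  have "closed (convex hull S)"
    using assms(1) by (intro compact_imp_closed compact_convex_hull finite_imp_compact)
  then obtain a b where "a \<bullet> x < b" "\<forall>y\<in>convex hull S. b < a \<bullet> y"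
    using separating_hyperplane_closed_point[OF convex_convex_hull _ assms(2)] by blast
  then show ?thesis
    using that hull_subset[of S convex] by blast
qed

lemma pog_dual_not_attained_in_ball:
  assumes "K \<ge> 1" "x \<notin> convex hull (d ` {1..K})" "p \<in> ball 0 1"
  shows "pog_dual K d v x > x \<bullet> p - pog_phi K d v p"
proof -
  obtain a b where "a \<bullet> x < b" "\<forall>y\<in>d ` {1..K}. b < a \<bullet> y"
    by (rule separate_point_finite_set[OF _ assms(2)]) auto
  then have ab: "a \<bullet> x < b" "\<forall>k\<in>{1..K}. b < a \<bullet> d k"
    by auto
  have "a \<noteq> 0"
  proof
    assume "a = 0"
    then show False using ab(1) ab(2)[rule_format, of 1] assms(1) by simp
  qed
  define s where "s = (1 - norm p) / norm a"
  have "s > 0" unfolding s_def using assms(3) \<open>a \<noteq> 0\<close> by simp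
  have "norm (p - s *\<^sub>R a) \<le> norm p + norm (s *\<^sub>R a)" by (rule norm_triangle_ineq4)
  also have "norm (s *\<^sub>R a) = 1 - norm p" unfolding s_def using \<open>a \<noteq> 0\<close> assms(3) by simp
  finally have "p - s *\<^sub>R a \<in> cball 0 1" by simp
  have "x \<bullet> p - pog_phi K d v p < x \<bullet> p - s * (a \<bullet> x) - pog_phi K d v (p - s *\<^sub>R a) + s * (a \<bullet> x - b)"
    using pog_phi_translate_less[OF assms(1) ab(2) \<open>s > 0\<close>, of v p] by (simp add: algebra_simps)
  also have "\<dots> \<le> x \<bullet> (p - s *\<^sub>R a) - pog_phi K d v (p - s *\<^sub>R a)"
    using ab(1) \<open>s > 0\<close> by (simp add: inner_diff_right inner_commute mult_nonneg_nonpos)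
  also have "\<dots> \<le> pog_dual K d v x"
    by (rule pog_dual_ge[OF assms(1) \<open>p - s *\<^sub>R a \<in> cball 0 1\<close>])
  finally show ?thesis .
qed

theorem lemma2p6:
  fixes K :: nat and d :: "nat \<Rightarrow> real^2" and alpha v :: "nat \<Rightarrow> real" and x :: "real^2"
  assumes "K \<ge> 1"
    and "\<forall>k\<in>{1..K}. alpha k > 0"
    and "(\<Sum>k=1..K. alpha k) = pi"
    and "pogorelov K d alpha v"
    and "x \<notin> convex hull (d ` {1..K})"
  shows "subgrad (pog_dual K d v) x \<subseteq> sphere 0 1"
proof
  fix p assume p: "p \<in> subgrad (pog_dual K d v) x"
  have "1 \<in> {1..K}" using assms(1) by simp
  have growth: "\<And>z. pog_dual K d v z \<le> 1 * norm z + (norm (d 1) + v 1)"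
    using pog_dual_le_norm[OF \<open>1 \<in> {1..K}\<close>] by simp
  have "norm p \<le> 1"
    by (rule subgrad_norm_le[OF growth zero_le_one p])
  moreover have "p \<notin> ball 0 1"
    using subgrad_pog_dual_attains[OF assms(1) p] pog_dual_not_attained_in_ball[OF assms(1,5), of p v]
    by linarith
  ultimately show "p \<in> sphere 0 1" by simp
qed

end
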